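(* In the setting below, if a PHB $\mathbf{E}$ is $\Delta^-$-stable but $\Delta^+$-unstable, then its destabilizing subbundle $\mathbf{L}^+$ is unique.
   Context: Fix distinct $x_1,\dots,x_n\in\mathbb{C}\mathbb{P}^1$. Weights $\beta=(\beta_1(x_i),\beta_2(x_i))_i$ with $0\le\beta_1(x_i)<\beta_2(x_i)<1$ form the weight space $Q$; put $\alpha=\beta_2-\beta_1$ and $\varepsilon_T(\alpha)=\sum_{i\in T}\alpha_i-\sum_{i\notin T}\alpha_i$. Walls are the intersections of $Q$ with hyperplanes $\varepsilon_T(\beta_2-\beta_1)=0$; chambers are components of the complement. All PHBs here are rank-2 parabolic Higgs bundles $(E,\Phi)$ over $\mathbb{C}\mathbb{P}^1$ whose underlying holomorphic bundle is trivial, with fixed determinant and trace-free Higgs field: $E$ has a line $E_{x_i,2}\subset E_{x_i}$ at each $x_i$ with weights $\beta_1(x_i)<\beta_2(x_i)$, $\Phi$ is a meromorphic $\mathrm{End}_0(E)\otimes K_{\mathbb{C}\mathbb{P}^1}$-valued section with at most simple poles at the $x_i$, residue mapping $E_{x_i}$ into $E_{x_i,2}$ and killing $E_{x_i,2}$. A parabolic line subbundle $L$ has weight $\beta_2(x_i)$ at $x_i$ if $L_{x_i}=E_{x_i,2}$, $\beta_1(x_i)$ otherwise; discrete data $S_L=\{i:L_{x_i}=E_{x_i,2}\}$. $(E,\Phi)$ is $\beta$-stable iff every $\Phi$-invariant line subbundle $L$ has $\varepsilon_{S_L}(\beta_2-\beta_1)<0$. Fix a point of $Q$ on exactly one wall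 $W$, with adjacent chambers $\Delta^\pm$, and $S$ the index set of $W$ normalized so that $\varepsilon_S(\beta_2-\beta_1)>0$ on $\Delta^+$. $\Delta^\pm$-stable means stable for weights in $\Delta^\pm$. A destabilizing subbundle of a $\Delta^-$-stable, $\Delta^+$-unstable $\mathbf{E}$ is a $\Phi$-invariant parabolic line subbundle for which the stability inequality holds in $\Delta^-$ but fails in $\Delta^+$. *)

theory Defs
  imports "HOL-Analysis.Analysis"
begin

text \<open>Marked points are indexed by a finite type 'n. A weight
 beta = (beta1, beta2) is a point of real^'n x real^'n.\<close>

definition weight_space :: "((real^'n) \<times> (real^'n)) set" where
  "weight_space = {(b1, b2). \<forall>i. 0 \<le> b1$i \<and> b1$i < b2$i \<and> b2$i < 1}"

definition alpha :: "(real^'n) \<times> (real^'n) \<Rightarrow> real^'n" where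
  "alpha b = snd b - fst b"

definition eps :: "'n set \<Rightarrow> real^'n \<Rightarrow> real" where
  "eps T a = (\<Sum>i\<in>T. a$i) - (\<Sum>i\<in>- T. a$i)"

definition wall_of :: "'n set \<Rightarrow> ((real^'n) \<times> (real^'n)) set" where
  "wall_of T = weight_space \<inter> {b. eps T (alpha b) = 0}"

definition walls :: "((real^'n) \<times> (real^'n)) set set" where
  "walls = range wall_of"

definition chambers :: "((real^'n) \<times> (real^'n)) set set" where
  "chambers = components (weight_space - \<Union>walls)"

definition cline :: "complex^2 \<Rightarrow> (complex^2) set" where
  "cline v = range (\<lambda>c. c *s v)"

definition is_line :: "(complex^2) set \<Rightarrow> bool" where
  "is_line L \<longleftrightarrow> (\<exists>v. v \<noteq> 0 \<and> L = cline v)"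

definition mtrace :: "complex^2^2 \<Rightarrow> complex" where
  "mtrace M = (\<Sum>i\<in>UNIV. M$i$i)"

text \<open>A PHB with trivial underlying bundle: flags ell i = E_{x_i,2} and
 the Higgs field Phi = sum_i A_i dz/(z - x_i), encoded by its residues A_i
 (sl2-valued, summing to zero by the residue theorem).\<close>

definition is_PHB :: "('n \<Rightarrow> (complex^2) set) \<Rightarrow> ('n \<Rightarrow> complex^2^2) \<Rightarrow> bool" where
  "is_PHB ell A \<longleftrightarrow>
     (\<forall>i. is_line (ell i)) \<and>
     (\<forall>i. mtrace (A i) = 0) \<and>
     (\<Sum>i\<in>UNIV. A i) = 0 \<and>
     (\<forall>i u. A i *v u \<in> ell i) \<and>
     (\<forall>i. \<forall>u\<in>ell i. A i *v u = 0)"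

definition S_of :: "('n \<Rightarrow> (complex^2) set) \<Rightarrow> (complex^2) set \<Rightarrow> 'n set" where
  "S_of ell L = {i. L = ell i}"

definition invariant :: "('n \<Rightarrow> complex^2^2) \<Rightarrow> (complex^2) set \<Rightarrow> bool" where
  "invariant A L \<longleftrightarrow> (\<forall>i. \<forall>u\<in>L. A i *v u \<in> L)"

definition stable :: "(real^'n) \<times> (real^'n) \<Rightarrow> ('n \<Rightarrow> (complex^2) set) \<Rightarrow> ('n \<Rightarrow> complex^2^2) \<Rightarrow> bool" where
  "stable b ell A \<longleftrightarrow>
     (\<forall>L. is_line L \<and> invariant A L \<longrightarrow> eps (S_of ell L) (alpha b) < 0)"

definition chamber_stable ::
  "((real^'n) \<times> (real^'n)) set \<Rightarrow> ('n \<Rightarrow> (complex^2) set) \<Rightarrow> ('n \<Rightarrow> complex^2^2) \<Rightarrow> bool" where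
  "chamber_stable D ell A \<longleftrightarrow> (\<forall>b\<in>D. stable b ell A)"

definition destabilizing ::
  "((real^'n) \<times> (real^'n)) set \<Rightarrow> ((real^'n) \<times> (real^'n)) set \<Rightarrow>
   ('n \<Rightarrow> (complex^2) set) \<Rightarrow> ('n \<Rightarrow> complex^2^2) \<Rightarrow> (complex^2) set \<Rightarrow> bool" where
  "destabilizing Dm Dp ell A L \<longleftrightarrow>
     is_line L \<and> invariant A L \<and>
     (\<forall>b\<in>Dm. eps (S_of ell L) (alpha b) < 0) \<and>
     (\<forall>b\<in>Dp. \<not> eps (S_of ell L) (alpha b) < 0)"

end

theory Submission
  imports Defs
begin

text \<open>Two distinct lines cannot both equal the flag line at the same marked point, so the index sets
  of two distinct destabilizing subbundles are disjoint. For a weight with all \<open>\<alpha>\<^sub>i > 0\<close>, two disjoint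
  index sets cannot both have positive \<open>\<epsilon>\<close>, which gives uniqueness. Existence holds because the sign
  of \<open>\<epsilon>\<^sub>T(\<alpha>)\<close> is constant on a chamber: a chamber is connected and avoids every wall.\<close>

lemma chamber_subset_weight_space: "D \<in> chambers \<Longrightarrow> D \<subseteq> weight_space"
  unfolding chambers_def using in_components_subset by blast

lemma eps_alpha_nonzero_on_chamber:
  assumes "D \<in> chambers" "b \<in> D"
  shows "eps T (alpha b) \<noteq> 0"
proof -
  have "D \<subseteq> weight_space - \<Union>walls"
    using assms(1) in_components_subset unfolding chambers_def by blast
  then show ?thesis
    using assms(2) unfolding walls_def wall_of_def by blast
qed

lemma alpha_pos: "b \<in> weight_space \<Longrightarrow> alpha b $ i > 0"
  unfolding weight_space_def alpha_def by (cases b) auto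

lemma continuous_on_eps_alpha: "continuous_on X (\<lambda>b. eps T (alpha b))"
  unfolding eps_def alpha_def by (intro continuous_intros)

lemma eps_alpha_pos_on_chamber:
  assumes "D \<in> chambers" "b0 \<in> D" "eps T (alpha b0) > 0" "b \<in> D"
  shows "eps T (alpha b) > 0"
proof (rule ccontr)
  assume "\<not> ?thesis"
  with eps_alpha_nonzero_on_chamber[OF assms(1,4), of T] have neg: "eps T (alpha b) < 0"
    by linarith
  have "connected ((\<lambda>b. eps T (alpha b)) ` D)"
    using connected_continuous_image[OF continuous_on_eps_alpha in_components_connected] assms(1)
    unfolding chambers_def by blast
  then have "(0::real) \<in> (\<lambda>b. eps T (alpha b)) ` D"
    using connectedD_interval[of _ "eps T (alpha b)" "eps T (alpha b0)" 0] neg assms(2-4)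
    by force
  then show False
    using eps_alpha_nonzero_on_chamber[OF assms(1)] by force
qed

lemma eps_disjoint_not_both_pos:
  fixes a :: "real^'n"
  assumes nonneg: "\<And>i. a $ i \<ge> 0" and disj: "S1 \<inter> S2 = {}"
  shows "\<not> (eps S1 a > 0 \<and> eps S2 a > 0)"
proof -
  have "(\<Sum>i\<in>S2. a$i) \<le> (\<Sum>i\<in>- S1. a$i)" "(\<Sum>i\<in>S1. a$i) \<le> (\<Sum>i\<in>- S2. a$i)"
    by (rule sum_mono2; use disj nonneg in auto)+
  then show ?thesis
    unfolding eps_def by linarith
qed

lemma S_of_disjoint: "L1 \<noteq> L2 \<Longrightarrow> S_of ell L1 \<inter> S_of ell L2 = {}"
  unfolding S_of_def by auto

lemma destabilizing_exists:
  assumes "Dp \<in> chambers" "chamber_stable Dm ell A" "\<not> chamber_stable Dp ell A"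
  shows "\<exists>L. destabilizing Dm Dp ell A L"
proof -
  from assms(3) obtain b0 L where b0: "b0 \<in> Dp" and L: "is_line L" "invariant A L"
    and "\<not> eps (S_of ell L) (alpha b0) < 0"
    unfolding chamber_stable_def stable_def by blast
  with eps_alpha_nonzero_on_chamber[OF assms(1) b0] have "eps (S_of ell L) (alpha b0) > 0"
    by (metis linorder_neqE_linordered_idom)
  with eps_alpha_pos_on_chamber[OF assms(1) b0] have "\<forall>b\<in>Dp. \<not> eps (S_of ell L) (alpha b) < 0"
    by force
  moreover have "\<forall>b\<in>Dm. eps (S_of ell L) (alpha b) < 0"
    using assms(2) L unfolding chamber_stable_def stable_def by blast
  ultimately show ?thesis
    using L unfolding destabilizing_def by blast
qed

lemma destabilizing_unique:
  assumes "Dp \<in> chambers" "b0 \<in> Dp"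
    and "destabilizing Dm Dp ell A L1" "destabilizing Dm Dp ell A L2"
  shows "L1 = L2"
proof (rule ccontr)
  assume "L1 \<noteq> L2"
  have "eps (S_of ell L) (alpha b0) > 0" if "destabilizing Dm Dp ell A L" for L
    using that assms(2) eps_alpha_nonzero_on_chamber[OF assms(1,2), of "S_of ell L"]
    unfolding destabilizing_def by (meson linorder_neqE_linordered_idom)
  moreover have "\<And>i. alpha b0 $ i \<ge> 0"
    using alpha_pos chamber_subset_weight_space[OF assms(1)] assms(2) less_imp_le by blast
  ultimately show False
    using eps_disjoint_not_both_pos[OF _ S_of_disjoint[OF \<open>L1 \<noteq> L2\<close>]] assms(3,4)
    by metis
qed

theorem mainTheorem6:
  fixes p :: "(real^'n) \<times> (real^'n)"
    and W :: "((real^'n) \<times> (real^'n)) set"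
    and S :: "'n set"
    and Dp Dm :: "((real^'n) \<times> (real^'n)) set"
    and ell :: "'n \<Rightarrow> (complex^2) set"
    and A :: "'n \<Rightarrow> complex^2^2"
  assumes "p \<in> weight_space"
    and "{V \<in> walls. p \<in> V} = {W}"
    and "W = wall_of S"
    and "Dp \<in> chambers" and "Dm \<in> chambers"
    and "p \<in> closure Dp" and "p \<in> closure Dm"
    and "\<forall>b\<in>Dp. eps S (alpha b) > 0"
    and "\<forall>b\<in>Dm. eps S (alpha b) < 0"
    and "is_PHB ell A"
    and "chamber_stable Dm ell A"
    and "\<not> chamber_stable Dp ell A"
  shows "\<exists>!L. destabilizing Dm Dp ell A L"
proof -
  obtain L where L: "destabilizing Dm Dp ell A L"
    using destabilizing_exists[OF assms(4,11,12)] by blast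
  from assms(12) obtain b0 where "b0 \<in> Dp"
    unfolding chamber_stable_def by blast
  with L show ?thesis
    using destabilizing_unique[OF assms(4)] by blast
qed

end
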